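(* Under the assumptions of the approximation theorem (open convex $\mathcal D$, $K\in\mathbb{Z}_{\ge2}$, each $L^{(n)}$ is $2K$ times continuously differentiable on $\mathcal D$ with derivatives up to order $2K$ bounded uniformly in $n$), there is a constant $C$ (depending on $K$, $\beta$ and the derivative bounds only) such that for all $\theta\in\mathcal D$, all $m\in[1,K]$, all $r\in[0,2K-m]$, all $n\ge0$ and all $a\in[1,n]$: $$\|\nabla^rc_m^{(n)}(\theta)\|\le C,\qquad\|\nabla^rp_m^{(n,a)}(\theta)\|\le C\,a^m.$$
   Context: Fix $\beta\in(0,1)$. $[a,b]$ denotes $[a,b]\cap\mathbb{Z}$; empty sums are $0$. $\nabla^kF(\theta)$ is the $k$-th derivative (symmetric $k$-linear map), $\nabla^0F=F$, and $[u_1^{\times r_1},\dots]$ means $u_1$ repeated $r_1$ times, etc. For integers $i,l\ge0$, $\mathcal K_{i,l}:=\{(k_0,\dots,k_l)\in\mathbb{Z}_{\ge0}^{l+1}:\ k_0+\dots+k_l=i,\ \sum_{j=1}^l jk_j=l\}$. Given losses $L^{(s)}:\mathcal D\to\mathbb{R}$, $s\ge0$, the memoryless coefficients and history terms are defined recursively by $c_1^{(n)}(\theta)=-\sum_{k=0}^n\beta^k\nabla L^{(n-k)}(\theta)$, $$c_m^{(n)}(\theta)=-\sum_{k=1}^n\beta^k\sum_{\substack{i,l\ge0\\ i+l=m-1}}\sum_{(i_0,\dots,i_l)\in\mathcal K_{i,l}}\frac{1}{i_0!\cdots i_l!}\nabla^{i+1}L^{(n-k)}(\theta)\big[p_1^{(n,k)}(\theta)^{\times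 i_0},\dots,p_{l+1}^{(n,k)}(\theta)^{\times i_l}\big],\ m\ge2,$$ $$p_m^{(n,a)}(\theta)=-\sum_{s=1}^a\sum_{\substack{j\ge1,\,i,l\ge0\\ i+j+l=m}}\sum_{(k_0,\dots,k_l)\in\mathcal K_{i,l}}\frac{1}{k_0!\cdots k_l!}\nabla^{i}c_j^{(n-s)}(\theta)\big[p_1^{(n,s)}(\theta)^{\times k_0},\dots,p_{l+1}^{(n,s)}(\theta)^{\times k_l}\big]$$ for $m\ge1$, $a\in[1,n]$. *)

theory Defs
  imports "HOL-Analysis.Analysis"
begin

fun Dk :: "nat \<Rightarrow> ('a::real_normed_vector \<Rightarrow> 'b::real_normed_vector) \<Rightarrow> 'a \<Rightarrow> 'a list \<Rightarrow> 'b" where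
  "Dk 0 F x us = F x"
| "Dk (Suc k) F x [] = 0"
| "Dk (Suc k) F x (u # us) = frechet_derivative (\<lambda>y. Dk k F y us) (at x) u"

definition opnorm_le :: "('a::real_normed_vector list \<Rightarrow> 'b::real_normed_vector) \<Rightarrow> nat \<Rightarrow> real \<Rightarrow> bool" where
  "opnorm_le T r C \<longleftrightarrow>
     (\<forall>us. length us = r \<longrightarrow> (\<forall>u\<in>set us. norm u \<le> 1) \<longrightarrow> norm (T us) \<le> C)"

definition Ck_on :: "nat \<Rightarrow> 'a::real_normed_vector set \<Rightarrow> ('a \<Rightarrow> 'b::real_normed_vector) \<Rightarrow> bool" where
  "Ck_on k D F \<longleftrightarrow>
     (\<forall>j<k. \<forall>us. length us = j \<longrightarrow> (\<forall>x\<in>D.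
        ((\<lambda>y. Dk j F y us) has_derivative (\<lambda>u. Dk (Suc j) F x (u # us))) (at x))) \<and>
     (\<forall>j\<le>k. \<forall>us. length us = j \<longrightarrow> continuous_on D (\<lambda>y. Dk j F y us))"

text \<open>Vector (gradient) representation of the remaining free first slot:
  T[., args] as an element of the Euclidean space.\<close>
definition gvec :: "('a::euclidean_space list \<Rightarrow> real) \<Rightarrow> 'a list \<Rightarrow> 'a" where
  "gvec T args = (\<Sum>b\<in>Basis. T (b # args) *\<^sub>R b)"

definition Kset :: "nat \<Rightarrow> nat \<Rightarrow> nat list set" where
  "Kset i l = {ks. length ks = Suc l \<and> sum_list ks = i \<and> (\<Sum>j<Suc l. j * ks ! j) = l}"

definition margs :: "nat list \<Rightarrow> (nat \<Rightarrow> 'a) \<Rightarrow> 'a list" where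
  "margs ks q = concat (map (\<lambda>j. replicate (ks ! j) (q (Suc j))) [0..<length ks])"

definition kcoef :: "nat list \<Rightarrow> real" where
  "kcoef ks = 1 / real (prod_list (map fact ks))"

text \<open>c m n = c_m^{(n)}, p m n a = p_m^{(n,a)}; the recursive defining equations on D.\<close>
definition memoryless_coeffs ::
  "real \<Rightarrow> (nat \<Rightarrow> 'a::euclidean_space \<Rightarrow> real) \<Rightarrow> 'a set \<Rightarrow>
   (nat \<Rightarrow> nat \<Rightarrow> 'a \<Rightarrow> 'a) \<Rightarrow> (nat \<Rightarrow> nat \<Rightarrow> nat \<Rightarrow> 'a \<Rightarrow> 'a) \<Rightarrow> bool" where
  "memoryless_coeffs \<beta> L D c p \<longleftrightarrow>
     (\<forall>n. \<forall>\<theta>\<in>D. c 1 n \<theta> = - (\<Sum>k\<le>n. \<beta> ^ k *\<^sub>R gvec (Dk 1 (L (n - k)) \<theta>) [])) \<and>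
     (\<forall>m\<ge>2. \<forall>n. \<forall>\<theta>\<in>D. c m n \<theta> =
        - (\<Sum>k\<in>{1..n}. \<beta> ^ k *\<^sub>R
             (\<Sum>i\<le>m - 1. \<Sum>ks\<in>Kset i (m - 1 - i).
                kcoef ks *\<^sub>R gvec (Dk (Suc i) (L (n - k)) \<theta>) (margs ks (\<lambda>q. p q n k \<theta>))))) \<and>
     (\<forall>m\<ge>1. \<forall>n. \<forall>a\<in>{1..n}. \<forall>\<theta>\<in>D. p m n a \<theta> =
        - (\<Sum>s\<in>{1..a}. \<Sum>j\<in>{1..m}. \<Sum>i\<le>m - j. \<Sum>ks\<in>Kset i (m - j - i).
             kcoef ks *\<^sub>R Dk i (c j (n - s)) \<theta> (margs ks (\<lambda>q. p q n s \<theta>))))"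

end

theory Submission
  imports Defs
begin

(* Say that f has bounded derivatives of order N with bound B on D if all iterated directional
   derivatives of f of order at most N in unit directions exist on D and have norm at most B.
   This class is closed under sums and bounded linear maps and, up to a factor 2^N coming from the
   Leibniz rule, under products; substituting such functions into the slots of a multilinear form
   with bounded derivatives costs a factor DIM * 2^N per slot, after expanding each argument in the
   standard basis.  The recursion then gives, by induction on m, that c_m^(n) and p_m^(n,a) have
   bounded derivatives of order 2K - m with bounds C and C a^m: the terms of c_m grow like k^(m-1)
   through p^(n,k), which the weights beta^k absorb because sum_k k^e beta^k converges, and the
   sum over s in [1, a] defining p_m adds a^(m-1) sized terms a times. *)

lemma frechet_derivative_cong_open:
  assumes "open D" "x \<in> D" "\<And>y. y \<in> D \<Longrightarrow> f y = g y"
  shows "frechet_derivative f (at x) = frechet_derivative g (at x)"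
proof -
  have "(\<lambda>f'. (f has_derivative f') (at x)) = (\<lambda>f'. (g has_derivative f') (at x))"
    using has_derivative_transform_within_open[OF _ assms(1,2), of f _ _ g]
      has_derivative_transform_within_open[OF _ assms(1,2), of g _ _ f] assms(3)
    by (intro ext iffI) auto
  then show ?thesis unfolding frechet_derivative_def by simp
qed

lemma Dk_cong_open:
  assumes "open D" "x \<in> D" "\<And>y. y \<in> D \<Longrightarrow> f y = g y"
  shows "Dk k f x us = Dk k g x us"
  using assms(2)
proof (induction k arbitrary: x us)
  case 0
  then show ?case using assms(3) by simp
next
  case (Suc k)
  show ?case
  proof (cases us)
    case (Cons w ws)
    have "frechet_derivative (\<lambda>y. Dk k f y ws) (at x) = frechet_derivative (\<lambda>y. Dk k g y ws) (at x)"
      by (rule frechet_derivative_cong_open[OF assms(1) Suc.prems]) (rule Suc.IH)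
    then show ?thesis using Cons by simp
  qed simp
qed

lemma Dk_snoc:
  "length us = k \<Longrightarrow> Dk (Suc k) F x (us @ [u]) = Dk k (\<lambda>y. frechet_derivative F (at y) u) x us"
  by (induction us arbitrary: k x) auto

section \<open>Functions with bounded iterated derivatives\<close>

(* The direction of the first (innermost) derivative is the last argument of Dk, see Dk_snoc. *)
fun bounded_derivs ::
  "nat \<Rightarrow> 'a::real_normed_vector set \<Rightarrow> ('a \<Rightarrow> 'b::real_normed_vector) \<Rightarrow> real \<Rightarrow> bool"
  where
    "bounded_derivs 0 D f B \<longleftrightarrow> (\<forall>x\<in>D. norm (f x) \<le> B)"
  | "bounded_derivs (Suc N) D f B \<longleftrightarrow>
      (\<forall>x\<in>D. norm (f x) \<le> B \<and> (f has_derivative frechet_derivative f (at x)) (at x)) \<and>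
      (\<forall>u. norm u \<le> 1 \<longrightarrow> bounded_derivs N D (\<lambda>y. frechet_derivative f (at y) u) B)"

lemma bounded_derivs_norm: "bounded_derivs N D f B \<Longrightarrow> x \<in> D \<Longrightarrow> norm (f x) \<le> B"
  by (cases N) auto

lemma bounded_derivs_mono:
  "bounded_derivs N D f A \<Longrightarrow> N' \<le> N \<Longrightarrow> A \<le> B \<Longrightarrow> bounded_derivs N' D f B"
proof (induction N arbitrary: f N')
  case 0
  then show ?case by auto
next
  case (Suc N)
  show ?case
  proof (cases N')
    case 0
    then show ?thesis using bounded_derivs_norm[OF Suc.prems(1)] Suc.prems(3) by (auto intro: order_trans)
  next
    case (Suc N'')
    then show ?thesis using Suc.IH Suc.prems by auto
  qed
qed

lemma bounded_derivs_le_bound: "bounded_derivs N D f A \<Longrightarrow> A \<le> B \<Longrightarrow> bounded_derivs N D f B"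
  using bounded_derivs_mono by blast

lemma bounded_derivs_cong:
  assumes "open D" "\<And>y. y \<in> D \<Longrightarrow> f y = g y" "bounded_derivs N D f B"
  shows "bounded_derivs N D g B"
  using assms(2,3)
proof (induction N arbitrary: f g)
  case 0
  then show ?case by simp
next
  case (Suc N)
  have fd: "frechet_derivative f (at x) = frechet_derivative g (at x)" if "x \<in> D" for x
    using frechet_derivative_cong_open[OF assms(1) that Suc.prems(1)] .
  have "(g has_derivative frechet_derivative g (at x)) (at x)" if "x \<in> D" for x
    using has_derivative_transform_within_open[OF _ assms(1) that Suc.prems(1)] Suc.prems(2) fd that
    by simp
  moreover have "bounded_derivs N D (\<lambda>y. frechet_derivative g (at y) u) B" if "norm u \<le> 1" for u
    using Suc.IH[of "\<lambda>y. frechet_derivative f (at y) u"] Suc.prems(2) fd that by simp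
  ultimately show ?case using Suc.prems by simp
qed

lemma bounded_derivs_has_derivative:
  "bounded_derivs (Suc N) D f B \<Longrightarrow> x \<in> D \<Longrightarrow> (f has_derivative frechet_derivative f (at x)) (at x)"
  by simp

lemma bounded_derivs_SucI:
  assumes "open D"
    and "\<And>x. x \<in> D \<Longrightarrow> norm (f x) \<le> B"
    and "\<And>x. x \<in> D \<Longrightarrow> (f has_derivative f' x) (at x)"
    and "\<And>u. norm u \<le> 1 \<Longrightarrow> bounded_derivs N D (\<lambda>y. f' y u) B"
  shows "bounded_derivs (Suc N) D f B"
proof -
  have fd: "frechet_derivative f (at x) = f' x" if "x \<in> D" for x
    using frechet_derivative_at[OF assms(3)[OF that]] by simp
  have "bounded_derivs N D (\<lambda>y. frechet_derivative f (at y) u) B" if "norm u \<le> 1" for u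
    by (rule bounded_derivs_cong[OF assms(1) _ assms(4)[OF that]]) (simp add: fd)
  then show ?thesis using assms(2,3) fd by simp
qed

lemma bounded_derivs_const:
  fixes v :: "'b::real_normed_vector" and D :: "'a::real_normed_vector set"
  shows "norm v \<le> B \<Longrightarrow> bounded_derivs N D (\<lambda>y. v) B"
proof (induction N arbitrary: v)
  case (Suc N)
  have "bounded_derivs N D (\<lambda>y. 0::'b) B"
    using Suc.IH[of 0] order_trans[OF norm_ge_zero Suc.prems] by simp
  then show ?case using Suc.prems by auto
qed simp

lemma bounded_derivs_linear:
  assumes "open D" "bounded_linear h" "\<And>z. norm (h z) \<le> Ch * norm z" "0 \<le> Ch"
    and "bounded_derivs N D f B"
  shows "bounded_derivs N D (\<lambda>y. h (f y)) (Ch * B)"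
  using assms(5)
proof (induction N arbitrary: f)
  case 0
  have "norm (h (f x)) \<le> Ch * B" if "x \<in> D" for x
    using assms(3)[of "f x"] mult_left_mono[OF bounded_derivs_norm[OF 0 that] assms(4)] by linarith
  then show ?case by simp
next
  case (Suc N)
  show ?case
  proof (rule bounded_derivs_SucI[OF assms(1)])
    fix x assume "x \<in> D"
    then show "norm (h (f x)) \<le> Ch * B"
      using assms(3)[of "f x"] mult_left_mono[OF bounded_derivs_norm[OF Suc.prems \<open>x \<in> D\<close>] assms(4)]
      by linarith
    show "((\<lambda>y. h (f y)) has_derivative (\<lambda>u. h (frechet_derivative f (at x) u))) (at x)"
      by (rule bounded_linear.has_derivative[OF assms(2)]) (use Suc.prems \<open>x \<in> D\<close> in simp)
  next
    fix u :: 'a assume "norm u \<le> 1"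
    then show "bounded_derivs N D (\<lambda>y. h (frechet_derivative f (at y) u)) (Ch * B)"
      using Suc by simp
  qed
qed

lemma bounded_derivs_uminus:
  "open D \<Longrightarrow> bounded_derivs N D f B \<Longrightarrow> bounded_derivs N D (\<lambda>y. - f y) B"
  using bounded_derivs_linear[OF _ bounded_linear_minus[OF bounded_linear_ident], of D 1 N f B] by simp

lemma bounded_derivs_add:
  assumes "open D" "bounded_derivs N D f A" "bounded_derivs N D g B"
  shows "bounded_derivs N D (\<lambda>y. f y + g y) (A + B)"
  using assms(2,3)
proof (induction N arbitrary: f g)
  case 0
  then show ?case by (simp add: norm_triangle_mono)
next
  case (Suc N)
  show ?case
  proof (rule bounded_derivs_SucI[OF assms(1)])
    fix x assume "x \<in> D"
    then show "norm (f x + g x) \<le> A + B"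
      using bounded_derivs_norm Suc.prems by (metis norm_triangle_mono)
    show "((\<lambda>y. f y + g y) has_derivative
        (\<lambda>u. frechet_derivative f (at x) u + frechet_derivative g (at x) u)) (at x)"
      using has_derivative_add Suc.prems \<open>x \<in> D\<close> by simp
  next
    fix u :: 'a assume "norm u \<le> 1"
    then show "bounded_derivs N D
        (\<lambda>y. frechet_derivative f (at y) u + frechet_derivative g (at y) u) (A + B)"
      using Suc by simp
  qed
qed

lemma bounded_derivs_sum:
  assumes "open D" "finite I" "\<And>i. i \<in> I \<Longrightarrow> bounded_derivs N D (f i) (B i)"
  shows "bounded_derivs N D (\<lambda>y. \<Sum>i\<in>I. f i y) (\<Sum>i\<in>I. B i)"
  using assms(2,3)
proof (induction I rule: finite_induct)
  case empty
  then show ?case using bounded_derivs_const[of 0 0] by simp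
next
  case (insert a I)
  then show ?case by (simp add: bounded_derivs_add[OF assms(1)])
qed

lemma bounded_derivs_sum_le:
  assumes "open D" "finite I" "\<And>i. i \<in> I \<Longrightarrow> bounded_derivs N D (f i) (B i)"
    and "(\<Sum>i\<in>I. B i) \<le> B'"
  shows "bounded_derivs N D (\<lambda>y. \<Sum>i\<in>I. f i y) B'"
  using bounded_derivs_mono[OF bounded_derivs_sum[OF assms(1-3)] order.refl assms(4)] .

lemma bounded_derivs_scaleR:
  fixes f :: "'a::real_normed_vector \<Rightarrow> real"
  assumes "open D" "bounded_derivs N D f A" "bounded_derivs N D g B" "0 \<le> A" "0 \<le> B"
  shows "bounded_derivs N D (\<lambda>y. f y *\<^sub>R g y) (2 ^ N * A * B)"
  using assms(2,3)
proof (induction N arbitrary: f g)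
  case 0
  then show ?case using assms(4,5) by (simp add: mult_mono')
next
  case (Suc N)
  show ?case
  proof (rule bounded_derivs_SucI[OF assms(1)])
    fix x assume x: "x \<in> D"
    have "norm (f x *\<^sub>R g x) \<le> A * B"
      using bounded_derivs_norm[OF Suc.prems(1) x] bounded_derivs_norm[OF Suc.prems(2) x] assms(4,5)
      by (simp add: mult_mono')
    also have "\<dots> \<le> 2 ^ Suc N * (A * B)"
      using mult_right_mono[OF one_le_power mult_nonneg_nonneg[OF assms(4,5)], of 2 "Suc N"] by simp
    finally show "norm (f x *\<^sub>R g x) \<le> 2 ^ Suc N * A * B" by (simp add: mult.assoc)
    show "((\<lambda>y. f y *\<^sub>R g y) has_derivative
        (\<lambda>u. f x *\<^sub>R frechet_derivative g (at x) u + frechet_derivative f (at x) u *\<^sub>R g x)) (at x)"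
      using has_derivative_scaleR Suc.prems x by simp
  next
    fix u :: 'a assume u: "norm u \<le> 1"
    have f: "bounded_derivs N D f A"
      by (rule bounded_derivs_mono[OF Suc.prems(1)]) simp_all
    have g: "bounded_derivs N D g B"
      by (rule bounded_derivs_mono[OF Suc.prems(2)]) simp_all
    have "bounded_derivs N D (\<lambda>y. f y *\<^sub>R frechet_derivative g (at y) u
        + frechet_derivative f (at y) u *\<^sub>R g y) (2 ^ N * A * B + 2 ^ N * A * B)"
      using u Suc.prems by (intro bounded_derivs_add[OF assms(1)] Suc.IH f g) simp_all
    then show "bounded_derivs N D (\<lambda>y. f y *\<^sub>R frechet_derivative g (at y) u
        + frechet_derivative f (at y) u *\<^sub>R g y) (2 ^ Suc N * A * B)"
      by (simp add: mult_ac)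
  qed
qed

lemma bounded_derivs_frechet_derivative:
  assumes "open D" "\<And>x. x \<in> D \<Longrightarrow> f differentiable (at x)"
    and "\<And>u. norm u \<le> 1 \<Longrightarrow> bounded_derivs N D (\<lambda>y. frechet_derivative f (at y) u) B"
  shows "bounded_derivs N D (\<lambda>y. frechet_derivative f (at y) v) (norm v * B)"
proof -
  have lin: "linear (frechet_derivative f (at y))" if "y \<in> D" for y
    using linear_frechet_derivative assms(2) that by blast
  have "bounded_derivs N D (\<lambda>y. norm v *\<^sub>R frechet_derivative f (at y) (v /\<^sub>R norm v)) (norm v * B)"
    by (rule bounded_derivs_linear[OF assms(1) bounded_linear_scaleR_right _ _ assms(3)])
      (simp_all add: sgn_div_norm[symmetric] norm_sgn)
  moreover have "norm v *\<^sub>R frechet_derivative f (at y) (v /\<^sub>R norm v) = frechet_derivative f (at y) v"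
    if "y \<in> D" for y
    using linear_scale[OF lin[OF that], of "norm v" "v /\<^sub>R norm v"] linear_0[OF lin[OF that]]
    by (cases "v = 0") auto
  ultimately show ?thesis by (rule bounded_derivs_cong[OF assms(1), rotated])
qed

corollary bounded_derivs_Suc_frechet_derivative:
  "open D \<Longrightarrow> bounded_derivs (Suc N) D f B \<Longrightarrow>
    bounded_derivs N D (\<lambda>y. frechet_derivative f (at y) v) (norm v * B)"
  by (rule bounded_derivs_frechet_derivative) (auto intro: differentiableI)

section \<open>Multilinearity of iterated derivatives\<close>

lemma Dk_add:
  assumes "open D" "bounded_derivs k D f A" "bounded_derivs k D g B" "x \<in> D" "length us = k"
  shows "Dk k (\<lambda>y. f y + g y) x us = Dk k f x us + Dk k g x us"
  using assms(2-5)
proof (induction k arbitrary: f g A B x us)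
  case 0
  then show ?case by simp
next
  case (Suc k)
  obtain us' u where us: "us = us' @ [u]" and len: "length us' = k"
    using Suc.prems(4) by (cases us rule: rev_exhaust) auto
  have "frechet_derivative (\<lambda>y. f y + g y) (at y) u =
      frechet_derivative f (at y) u + frechet_derivative g (at y) u" if "y \<in> D" for y
    using frechet_derivative_at[OF has_derivative_add[OF bounded_derivs_has_derivative
        bounded_derivs_has_derivative, OF Suc.prems(1) that Suc.prems(2) that], symmetric]
    by simp
  then have "Dk k (\<lambda>y. frechet_derivative (\<lambda>y. f y + g y) (at y) u) x us' =
      Dk k (\<lambda>y. frechet_derivative f (at y) u + frechet_derivative g (at y) u) x us'"
    by (rule Dk_cong_open[OF assms(1) Suc.prems(3)])
  also have "\<dots> = Dk k (\<lambda>y. frechet_derivative f (at y) u) x us' +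
      Dk k (\<lambda>y. frechet_derivative g (at y) u) x us'"
    by (rule Suc.IH[OF bounded_derivs_Suc_frechet_derivative[OF assms(1) Suc.prems(1)]
          bounded_derivs_Suc_frechet_derivative[OF assms(1) Suc.prems(2)] Suc.prems(3) len])
  finally show ?case unfolding us Dk_snoc[OF len] .
qed

lemma Dk_linear:
  assumes "open D" "bounded_linear h" "bounded_derivs k D f B" "x \<in> D" "length us = k"
  shows "Dk k (\<lambda>y. h (f y)) x us = h (Dk k f x us)"
  using assms(3-5)
proof (induction k arbitrary: f B x us)
  case 0
  then show ?case by simp
next
  case (Suc k)
  obtain us' u where us: "us = us' @ [u]" and len: "length us' = k"
    using Suc.prems(3) by (cases us rule: rev_exhaust) auto
  have "frechet_derivative (\<lambda>y. h (f y)) (at y) u = h (frechet_derivative f (at y) u)" if "y \<in> D" for y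
    using frechet_derivative_at[OF bounded_linear.has_derivative[OF assms(2)
        bounded_derivs_has_derivative[OF Suc.prems(1) that]], symmetric]
    by simp
  then have "Dk k (\<lambda>y. frechet_derivative (\<lambda>y. h (f y)) (at y) u) x us' =
      Dk k (\<lambda>y. h (frechet_derivative f (at y) u)) x us'"
    by (rule Dk_cong_open[OF assms(1) Suc.prems(2)])
  also have "\<dots> = h (Dk k (\<lambda>y. frechet_derivative f (at y) u) x us')"
    by (rule Suc.IH[OF bounded_derivs_Suc_frechet_derivative[OF assms(1) Suc.prems(1)] Suc.prems(2) len])
  finally show ?case unfolding us Dk_snoc[OF len] .
qed

definition multilinear :: "nat \<Rightarrow> ('a::real_vector list \<Rightarrow> 'b::real_vector) \<Rightarrow> bool" where
  "multilinear k T \<longleftrightarrow> (\<forall>pre post. length pre + length post + 1 = k \<longrightarrow> linear (\<lambda>v. T (pre @ v # post)))"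

lemma multilinear_Cons: "multilinear (Suc k) T \<Longrightarrow> multilinear k (\<lambda>vs. T (u # vs))"
  unfolding multilinear_def
proof (intro allI impI)
  fix pre post :: "'a list"
  assume "\<forall>pre post. length pre + length post + 1 = Suc k \<longrightarrow> linear (\<lambda>v. T (pre @ v # post))"
    and "length pre + length post + 1 = k"
  then have "linear (\<lambda>v. T ((u # pre) @ v # post))"
    by (metis add_Suc length_Cons)
  then show "linear (\<lambda>v. T (u # pre @ v # post))"
    by simp
qed

lemma linear_Dk_snoc:
  assumes "open D" "x \<in> D" "\<And>y. y \<in> D \<Longrightarrow> F differentiable (at y)"
    and "\<And>u. norm u \<le> 1 \<Longrightarrow> bounded_derivs n D (\<lambda>y. frechet_derivative F (at y) u) B"
    and "length pre \<le> n"
  shows "linear (\<lambda>v. Dk (Suc (length pre)) F x (pre @ [v]))"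
proof -
  let ?G = "\<lambda>v y. frechet_derivative F (at y) v"
  have G: "bounded_derivs (length pre) D (?G v) (norm v * B)" for v
    by (rule bounded_derivs_mono[OF bounded_derivs_frechet_derivative[OF assms(1,3,4)]])
      (use assms(5) in simp_all)
  have lin: "linear (frechet_derivative F (at y))" if "y \<in> D" for y
    using linear_frechet_derivative assms(3) that by blast
  show ?thesis
  proof (rule linearI, unfold Dk_snoc[OF refl])
    fix v w
    have "Dk (length pre) (?G (v + w)) x pre = Dk (length pre) (\<lambda>y. ?G v y + ?G w y) x pre"
      by (rule Dk_cong_open[OF assms(1,2)]) (simp add: linear_add lin)
    also have "\<dots> = Dk (length pre) (?G v) x pre + Dk (length pre) (?G w) x pre"
      by (rule Dk_add[OF assms(1) G G assms(2)]) simp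
    finally show "Dk (length pre) (?G (v + w)) x pre =
        Dk (length pre) (?G v) x pre + Dk (length pre) (?G w) x pre" .
  next
    fix r v
    have "Dk (length pre) (?G (r *\<^sub>R v)) x pre = Dk (length pre) (\<lambda>y. r *\<^sub>R ?G v y) x pre"
      by (rule Dk_cong_open[OF assms(1,2)]) (simp add: linear_scale lin)
    also have "\<dots> = r *\<^sub>R Dk (length pre) (?G v) x pre"
      by (rule Dk_linear[OF assms(1) bounded_linear_scaleR_right G assms(2)]) simp
    finally show "Dk (length pre) (?G (r *\<^sub>R v)) x pre = r *\<^sub>R Dk (length pre) (?G v) x pre" .
  qed
qed

lemma linear_Dk_slot:
  assumes "open D" "x \<in> D"
  shows "(\<And>y. y \<in> D \<Longrightarrow> F differentiable (at y)) \<Longrightarrow>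
    (\<And>u. norm u \<le> 1 \<Longrightarrow> bounded_derivs n D (\<lambda>y. frechet_derivative F (at y) u) B) \<Longrightarrow>
    length pre + length post \<le> n \<Longrightarrow>
    linear (\<lambda>v. Dk (length pre + length post + 1) F x (pre @ v # post))"
proof (induction post arbitrary: F n B rule: rev_induct)
  case Nil
  from Nil.prems have "linear (\<lambda>v. Dk (Suc (length pre)) F x (pre @ [v]))"
    by (intro linear_Dk_snoc[OF assms]) simp_all
  then show ?case
    by simp
next
  case (snoc u post)
  let ?G = "\<lambda>y. frechet_derivative F (at y) u"
  obtain n' where n: "n = Suc n'"
    using snoc.prems(3) by (cases n) auto
  have G: "bounded_derivs n D ?G (norm u * B)"
    by (rule bounded_derivs_frechet_derivative[OF assms(1) snoc.prems(1,2)])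
  have eq: "Dk (length pre + length (post @ [u]) + 1) F x (pre @ v # post @ [u]) =
      Dk (length pre + length post + 1) ?G x (pre @ v # post)" for v
    using Dk_snoc[of "pre @ v # post" "length pre + length post + 1" F x u] by simp
  show ?case unfolding eq
  proof (rule snoc.IH)
    show "?G differentiable (at y)" if "y \<in> D" for y
      using bounded_derivs_has_derivative[OF G[unfolded n] that] by (rule differentiableI)
    show "bounded_derivs n' D (\<lambda>y. frechet_derivative ?G (at y) v) (norm u * B)" if "norm v \<le> 1" for v
      using G that n by simp
    show "length pre + length post \<le> n'"
      using snoc.prems(3) n by simp
  qed
qed

lemma multilinear_Dk:
  assumes "open D" "x \<in> D" "\<And>y. y \<in> D \<Longrightarrow> F differentiable (at y)"
    and "\<And>u. norm u \<le> 1 \<Longrightarrow> bounded_derivs n D (\<lambda>y. frechet_derivative F (at y) u) B"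
    and "k \<le> Suc n"
  shows "multilinear k (Dk k F x)"
  unfolding multilinear_def
proof (intro allI impI)
  fix pre post :: "'a list"
  assume k: "length pre + length post + 1 = k"
  have "length pre + length post \<le> n"
    using k assms(5) by simp
  with assms(3,4) have "linear (\<lambda>v. Dk (length pre + length post + 1) F x (pre @ v # post))"
    by (rule linear_Dk_slot[OF assms(1,2)])
  then show "linear (\<lambda>v. Dk k F x (pre @ v # post))"
    unfolding k .
qed

corollary multilinear_Dk_bounded_derivs:
  assumes "open D" "x \<in> D" "bounded_derivs N D F B" "k \<le> N"
  shows "multilinear k (Dk k F x)"
proof (cases N)
  case 0
  then show ?thesis using assms(4) by (simp add: multilinear_def)
next
  case (Suc n)
  show ?thesis
  proof (rule multilinear_Dk[OF assms(1,2)])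
    show "F differentiable (at y)" if "y \<in> D" for y
      using bounded_derivs_has_derivative[OF assms(3)[unfolded Suc] that] by (rule differentiableI)
    show "bounded_derivs n D (\<lambda>y. frechet_derivative F (at y) u) B" if "norm u \<le> 1" for u
      using assms(3) Suc that by simp
    show "k \<le> Suc n"
      using assms(4) Suc by simp
  qed
qed

lemma bounded_derivs_Dk:
  "bounded_derivs (N + length ws) D F B \<Longrightarrow> \<forall>w\<in>set ws. norm w \<le> 1 \<Longrightarrow>
    bounded_derivs N D (\<lambda>y. Dk (length ws) F y ws) B"
proof (induction ws arbitrary: F rule: rev_induct)
  case Nil
  then show ?case by simp
next
  case (snoc u ws)
  have "bounded_derivs (N + length ws) D (\<lambda>y. frechet_derivative F (at y) u) B"
    using snoc.prems by simp
  from snoc.IH[OF this] snoc.prems(2) show ?case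
    using Dk_snoc[of ws "length ws" F _ u] by simp
qed

lemma opnorm_le_Dk:
  assumes "bounded_derivs N D F B" "r \<le> N" "x \<in> D"
  shows "opnorm_le (Dk r F x) r B"
  unfolding opnorm_le_def
proof (intro allI impI)
  fix us :: "'a list"
  assume us: "length us = r" "\<forall>u\<in>set us. norm u \<le> 1"
  have "bounded_derivs (0 + length us) D F B"
    by (rule bounded_derivs_mono[OF assms(1)]) (use us assms(2) in simp_all)
  from bounded_derivs_Dk[OF this us(2)] show "norm (Dk r F x us) \<le> B"
    using assms(3) us(1) by simp
qed

lemma opnorm_le_mono: "opnorm_le T r A \<Longrightarrow> A \<le> B \<Longrightarrow> opnorm_le T r B"
  unfolding opnorm_le_def by (blast intro: order_trans)

(* Expanding every argument in the standard basis turns the substitution of functions into a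
   multilinear form into sums of products of scalar coordinates, to which the Leibniz rule applies. *)
fun basis_expand :: "('a::euclidean_space list \<Rightarrow> 'b::real_vector) \<Rightarrow> 'a list \<Rightarrow> 'a list \<Rightarrow> 'b" where
  "basis_expand T pre [] = T pre"
| "basis_expand T pre (v # vs) = (\<Sum>b\<in>Basis. (v \<bullet> b) *\<^sub>R basis_expand T (pre @ [b]) vs)"

lemma multilinear_basis_expand:
  assumes "multilinear k T"
  shows "length pre + length vs = k \<Longrightarrow> T (pre @ vs) = basis_expand T pre vs"
proof (induction vs arbitrary: pre)
  case Nil
  then show ?case by simp
next
  case (Cons v vs)
  have lin: "linear (\<lambda>w. T (pre @ w # vs))"
    using assms Cons.prems unfolding multilinear_def by simp
  have "T (pre @ v # vs) = T (pre @ (\<Sum>b\<in>Basis. (v \<bullet> b) *\<^sub>R b) # vs)"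
    by (simp add: euclidean_representation)
  also have "\<dots> = (\<Sum>b\<in>Basis. (v \<bullet> b) *\<^sub>R T (pre @ b # vs))"
    using linear_sum[OF lin, of "\<lambda>b. (v \<bullet> b) *\<^sub>R b" Basis] linear_scale[OF lin]
    by (simp add: o_def)
  also have "\<dots> = (\<Sum>b\<in>Basis. (v \<bullet> b) *\<^sub>R basis_expand T (pre @ [b]) vs)"
    using Cons.IH[of "pre @ [_]"] Cons.prems by simp
  finally show ?case by simp
qed

lemma bounded_derivs_basis_expand:
  fixes T :: "'a \<Rightarrow> 'a::euclidean_space list \<Rightarrow> 'b::real_normed_vector"
  assumes "open D" "0 \<le> BT"
    and T: "\<And>ws. length ws = k \<Longrightarrow> set ws \<subseteq> Basis \<Longrightarrow> bounded_derivs N D (\<lambda>y. T y ws) BT"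
    and P: "\<And>q. q \<in> set qs \<Longrightarrow> bounded_derivs N D (P q) (B q)"
    and B: "\<And>q. q \<in> set qs \<Longrightarrow> 0 \<le> B q"
  shows "set pre \<subseteq> Basis \<Longrightarrow> length pre + length qs = k \<Longrightarrow>
    bounded_derivs N D (\<lambda>y. basis_expand (T y) pre (map (\<lambda>q. P q y) qs))
      ((real DIM('a) * 2 ^ N) ^ length qs * BT * prod_list (map B qs))"
  using P B
proof (induction qs arbitrary: pre)
  case Nil
  then show ?case using T by simp
next
  case (Cons q qs)
  let ?R = "(real DIM('a) * 2 ^ N) ^ length qs * BT * prod_list (map B qs)"
  have R: "0 \<le> ?R"
    using Cons.prems(4) assms(2) by (intro mult_nonneg_nonneg prod_list_nonneg) auto
  have summand: "bounded_derivs N D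
      (\<lambda>y. (P q y \<bullet> b) *\<^sub>R basis_expand (T y) (pre @ [b]) (map (\<lambda>q. P q y) qs)) (2 ^ N * B q * ?R)"
    if b: "b \<in> Basis" for b
  proof -
    have "bounded_derivs N D (\<lambda>y. P q y \<bullet> b) (1 * B q)"
      using Basis_le_norm[OF b] Cons.prems(3)
      by (intro bounded_derivs_linear[OF assms(1) bounded_linear_inner_left]) auto
    moreover have "bounded_derivs N D (\<lambda>y. basis_expand (T y) (pre @ [b]) (map (\<lambda>q. P q y) qs)) ?R"
      using Cons.IH[of "pre @ [b]"] Cons.prems b by simp
    moreover have "0 \<le> 1 * B q"
      using Cons.prems(4) by simp
    ultimately show ?thesis
      using bounded_derivs_scaleR[OF assms(1) _ _ _ R] by simp
  qed
  have "bounded_derivs N D (\<lambda>y. \<Sum>b\<in>Basis.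
      (P q y \<bullet> b) *\<^sub>R basis_expand (T y) (pre @ [b]) (map (\<lambda>q. P q y) qs))
      (\<Sum>b\<in>(Basis::'a set). 2 ^ N * B q * ?R)"
    using summand by (rule bounded_derivs_sum[OF assms(1) finite_Basis])
  then show ?case by (simp add: mult_ac)
qed

lemma bounded_derivs_multilinear_map:
  fixes T :: "'a \<Rightarrow> 'a::euclidean_space list \<Rightarrow> 'b::real_normed_vector"
  assumes "open D" "0 \<le> BT"
    and "\<And>y. y \<in> D \<Longrightarrow> multilinear (length qs) (T y)"
    and "\<And>ws. length ws = length qs \<Longrightarrow> set ws \<subseteq> Basis \<Longrightarrow> bounded_derivs N D (\<lambda>y. T y ws) BT"
    and "\<And>q. q \<in> set qs \<Longrightarrow> bounded_derivs N D (P q) (B q)" "\<And>q. q \<in> set qs \<Longrightarrow> 0 \<le> B q"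
  shows "bounded_derivs N D (\<lambda>y. T y (map (\<lambda>q. P q y) qs))
    ((real DIM('a) * 2 ^ N) ^ length qs * BT * prod_list (map B qs))"
proof (rule bounded_derivs_cong[OF assms(1) _ bounded_derivs_basis_expand[OF assms(1,2,4-6)]])
  show "basis_expand (T y) [] (map (\<lambda>q. P q y) qs) = T y (map (\<lambda>q. P q y) qs)" if "y \<in> D" for y
    using multilinear_basis_expand[OF assms(3)[OF that], of "[]"] by simp
qed simp_all

section \<open>The index sets K_{i,l}\<close>

lemma finite_Kset: "finite (Kset i l)"
proof -
  have sub: "Kset i l \<subseteq> {ks. set ks \<subseteq> {0..i} \<and> length ks = Suc l}"
  proof
    fix ks assume a: "ks \<in> Kset i l"
    have len: "length ks = Suc l" and si: "sum_list ks = i" using a unfolding Kset_def by auto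
    have "x \<le> i" if xin: "x \<in> set ks" for x
    proof -
      obtain t where t: "t < length ks" "ks ! t = x" using xin unfolding in_set_conv_nth by blast
      have "ks ! t \<le> sum_list ks" by (rule elem_le_sum_list) (rule t(1))
      then show ?thesis using t(2) si by simp
    qed
    then have "set ks \<subseteq> {0..i}" by (simp add: subset_iff)
    then show "ks \<in> {ks. set ks \<subseteq> {0..i} \<and> length ks = Suc l}" using len by simp
  qed
  have "finite {ks. set ks \<subseteq> {0..i} \<and> length ks = Suc l}"
    by (rule finite_lists_length_eq) simp
  then show ?thesis using sub by (rule finite_subset[rotated])
qed

lemma Kset_0_0: "Kset 0 0 = {[0]}"
  unfolding Kset_def by (auto simp: length_Suc_conv)

lemma kcoef_nonneg: "0 \<le> kcoef ks"
  unfolding kcoef_def by simp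

lemma kcoef_le_1: "kcoef ks \<le> 1"
proof -
  have "0 < prod_list (map fact ks :: nat list)"
    by (induction ks) auto
  then show ?thesis unfolding kcoef_def by simp
qed

lemma map_margs: "map f (margs ks Q) = margs ks (\<lambda>q. f (Q q))"
  unfolding margs_def by (simp add: map_concat o_def)

lemma length_margs: "ks \<in> Kset i l \<Longrightarrow> length (margs ks Q) = i"
proof -
  have "length (margs ks Q) = sum_list (map (\<lambda>j. ks ! j) [0..<length ks])"
    unfolding margs_def by (simp add: length_concat o_def)
  also have "\<dots> = sum_list ks"
    by (simp add: map_nth)
  finally show "ks \<in> Kset i l \<Longrightarrow> length (margs ks Q) = i"
    unfolding Kset_def by simp
qed

lemma set_margs_Kset:
  assumes "ks \<in> Kset i l" "q \<in> set (margs ks (\<lambda>q. q))"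
  shows "1 \<le> q \<and> q \<le> i + l"
proof -
  obtain t where t: "t < length ks" "0 < ks ! t" "q = Suc t"
    using assms(2) unfolding margs_def by auto
  have len: "length ks = Suc l" and si: "sum_list ks = i" and sl: "(\<Sum>j<Suc l. j * ks ! j) = l"
    using assms(1) unfolding Kset_def by auto
  have "t \<le> t * ks ! t"
    using t(2) by simp
  also have "\<dots> \<le> (\<Sum>j<Suc l. j * ks ! j)"
    by (rule member_le_sum) (use t(1) len in auto)
  finally have "t \<le> l"
    using sl by simp
  moreover have "1 \<le> i"
    using elem_le_sum_list[OF t(1)] t(2) si by simp
  ultimately show ?thesis
    using t(3) by simp
qed

lemma prod_list_margs: "prod_list (margs ks Q) = (\<Prod>j<length ks. Q (Suc j) ^ ks ! j)"
proof -
  have "prod_list (concat (map (\<lambda>j. replicate (ks ! j) (Q (Suc j))) xs)) =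
      prod_list (map (\<lambda>j. Q (Suc j) ^ ks ! j) xs)" for xs
    by (induction xs) auto
  then show ?thesis
    unfolding margs_def by (simp add: prod.distinct_set_conv_list[symmetric] atLeast0LessThan)
qed

lemma prod_list_margs_Kset:
  fixes C s :: real
  assumes "ks \<in> Kset i l"
  shows "prod_list (margs ks (\<lambda>q. C * s ^ q)) = C ^ i * s ^ (i + l)"
proof -
  have len: "length ks = Suc l" and si: "(\<Sum>j<length ks. ks ! j) = i"
    and sl: "(\<Sum>j<Suc l. j * ks ! j) = l"
    using assms unfolding Kset_def by (auto simp: sum_list_sum_nth atLeast0LessThan)
  have "prod_list (margs ks (\<lambda>q. C * s ^ q)) = (\<Prod>j<length ks. C ^ ks ! j * s ^ (Suc j * ks ! j))"
    unfolding prod_list_margs by (simp only: power_mult_distrib power_mult)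
  also have "\<dots> = C ^ (\<Sum>j<length ks. ks ! j) * s ^ (\<Sum>j<length ks. Suc j * ks ! j)"
    by (simp only: prod.distrib power_sum)
  also have "(\<Sum>j<length ks. Suc j * ks ! j) = (\<Sum>j<length ks. ks ! j) + (\<Sum>j<Suc l. j * ks ! j)"
    using len by (simp add: sum.distrib)
  finally show ?thesis
    using si sl by simp
qed

lemma bounded_derivs_margs:
  fixes T :: "'a \<Rightarrow> 'a::euclidean_space list \<Rightarrow> 'b::real_normed_vector"
  assumes "open D" "ks \<in> Kset i l" "0 \<le> BT" "0 \<le> C" "0 \<le> s"
    and "\<And>y. y \<in> D \<Longrightarrow> multilinear i (T y)"
    and "\<And>ws. length ws = i \<Longrightarrow> set ws \<subseteq> Basis \<Longrightarrow> bounded_derivs N D (\<lambda>y. T y ws) BT"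
    and "\<And>q. 1 \<le> q \<Longrightarrow> q \<le> i + l \<Longrightarrow> bounded_derivs N D (P q) (C * s ^ q)"
  shows "bounded_derivs N D (\<lambda>y. T y (margs ks (\<lambda>q. P q y)))
    ((real DIM('a) * 2 ^ N) ^ i * BT * (C ^ i * s ^ (i + l)))"
proof -
  let ?qs = "margs ks (\<lambda>q. q)"
  have len: "length ?qs = i"
    by (rule length_margs[OF assms(2)])
  have "bounded_derivs N D (\<lambda>y. T y (map (\<lambda>q. P q y) ?qs))
      ((real DIM('a) * 2 ^ N) ^ length ?qs * BT * prod_list (map (\<lambda>q. C * s ^ q) ?qs))"
  proof (rule bounded_derivs_multilinear_map[OF assms(1,3)])
    show "multilinear (length ?qs) (T y)" if "y \<in> D" for y
      using assms(6)[OF that] len by simp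
    show "bounded_derivs N D (\<lambda>y. T y ws) BT" if "length ws = length ?qs" "set ws \<subseteq> Basis" for ws
      using assms(7) that len by simp
    show "bounded_derivs N D (P q) (C * s ^ q)" if "q \<in> set ?qs" for q
      using assms(8) set_margs_Kset[OF assms(2) that] by blast
    show "0 \<le> C * s ^ q" for q
      using assms(4,5) by simp
  qed
  then show ?thesis
    using len prod_list_margs_Kset[OF assms(2)] by (simp add: map_margs)
qed

lemma bounded_derivs_gvec:
  fixes T :: "'a \<Rightarrow> 'a::euclidean_space list \<Rightarrow> real"
  assumes "open D" "\<And>b. b \<in> Basis \<Longrightarrow> bounded_derivs N D (\<lambda>y. T y (b # args y)) B"
  shows "bounded_derivs N D (\<lambda>y. gvec (T y) (args y)) (real DIM('a) * B)"
proof -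
  have "bounded_derivs N D (\<lambda>y. T y (b # args y) *\<^sub>R b) (1 * B)" if "b \<in> Basis" for b
    by (rule bounded_derivs_linear[OF assms(1) bounded_linear_scaleR_left _ _ assms(2)[OF that]])
      (use that in simp_all)
  then have "bounded_derivs N D (\<lambda>y. \<Sum>b\<in>Basis. T y (b # args y) *\<^sub>R b) (\<Sum>b\<in>(Basis::'a set). 1 * B)"
    by (intro bounded_derivs_sum[OF assms(1) finite_Basis])
  then show ?thesis
    unfolding gvec_def by simp
qed

lemma bounded_derivs_kcoef:
  assumes "open D" "0 \<le> B" "bounded_derivs N D f B"
  shows "bounded_derivs N D (\<lambda>y. kcoef ks *\<^sub>R f y) B"
proof -
  have "bounded_derivs N D (\<lambda>y. kcoef ks *\<^sub>R f y) (kcoef ks * B)"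
    by (rule bounded_derivs_linear[OF assms(1) bounded_linear_scaleR_right _ kcoef_nonneg assms(3)])
      (simp add: kcoef_nonneg)
  then show ?thesis
    by (rule bounded_derivs_mono) (simp_all add: assms(2) kcoef_le_1 mult_left_le_one_le kcoef_nonneg)
qed

section \<open>Bounds on the memoryless coefficients\<close>

lemma summable_poly_geom:
  fixes \<beta> :: real
  assumes "0 \<le> \<beta>" "\<beta> < 1"
  shows "summable (\<lambda>k. real k ^ e * \<beta> ^ k)"
proof -
  have "(\<lambda>n. norm (real n ^ e) / norm (real (Suc n) ^ e)) \<longlonglongrightarrow> 1"
  proof -
    have "(\<lambda>n. (real n / real (Suc n)) ^ e) \<longlonglongrightarrow> 1 ^ e"
      by (intro tendsto_power LIMSEQ_n_over_Suc_n)
    then show ?thesis by (simp add: power_divide)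
  qed
  then have "conv_radius (\<lambda>n. real n ^ e) = 1"
    by (intro conv_radius_ratio_limit_nonzero) auto
  with assms show ?thesis
    by (intro summable_in_conv_radius) simp
qed

lemma bounded_derivs_geometric_sum:
  fixes \<beta> :: real
  assumes "open D" "0 \<le> \<beta>" "\<beta> < 1" "0 \<le> W" "finite A"
    and "\<And>k. k \<in> A \<Longrightarrow> bounded_derivs N D (f k) (W * real k ^ e)"
  shows "bounded_derivs N D (\<lambda>y. \<Sum>k\<in>A. \<beta> ^ k *\<^sub>R f k y) (W * (\<Sum>k. real k ^ e * \<beta> ^ k))"
proof (rule bounded_derivs_sum_le[OF assms(1,5)])
  show "bounded_derivs N D (\<lambda>y. \<beta> ^ k *\<^sub>R f k y) (\<beta> ^ k * (W * real k ^ e))" if "k \<in> A" for k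
    by (rule bounded_derivs_linear[OF assms(1) bounded_linear_scaleR_right _ _ assms(6)[OF that]])
      (simp_all add: assms(2))
  have "(\<Sum>k\<in>A. \<beta> ^ k * (W * real k ^ e)) = W * (\<Sum>k\<in>A. real k ^ e * \<beta> ^ k)"
    by (simp add: sum_distrib_left mult_ac)
  also have "\<dots> \<le> W * (\<Sum>k. real k ^ e * \<beta> ^ k)"
    by (intro mult_left_mono[OF _ assms(4)] sum_le_suminf[OF summable_poly_geom[OF assms(2,3)] assms(5)])
      (simp add: assms(2))
  finally show "(\<Sum>k\<in>A. \<beta> ^ k * (W * real k ^ e)) \<le> W * (\<Sum>k. real k ^ e * \<beta> ^ k)" .
qed

lemma DIM_scale_power_le:
  fixes C :: real
  assumes "1 \<le> C" "i \<le> e"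
  shows "(real DIM('a::euclidean_space) * 2 ^ N) ^ i * C ^ i \<le> (real DIM('a) * 2 ^ N * C) ^ e"
proof -
  have "1 * 1 * 1 \<le> real DIM('a) * 2 ^ N * C"
    using DIM_positive[where 'a='a] assms(1) by (intro mult_mono) auto
  then have "(real DIM('a) * 2 ^ N * C) ^ i \<le> (real DIM('a) * 2 ^ N * C) ^ e"
    using assms(2) by (intro power_increasing) simp_all
  then show ?thesis
    by (simp add: power_mult_distrib)
qed

(* c_bound and p_bound are (number of terms) * (bound of a term) in the recursion for c_m and for
   p_m / a^m, when all coefficients of lower index are bounded by C.  Since p_m involves c_m
   itself, coeff_bound first enlarges C to cover c_(m+1) before bounding p_(m+1). *)
definition c_bound :: "nat \<Rightarrow> nat \<Rightarrow> real \<Rightarrow> real \<Rightarrow> nat \<Rightarrow> real \<Rightarrow> real" where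
  "c_bound d N M \<beta> m C = real (\<Sum>i\<le>m - 1. card (Kset i (m - 1 - i))) * d * M *
     (d * 2 ^ N * C) ^ (m - 1) * (\<Sum>k. real k ^ (m - 1) * \<beta> ^ k)"

definition p_bound :: "nat \<Rightarrow> nat \<Rightarrow> nat \<Rightarrow> real \<Rightarrow> real" where
  "p_bound d N m C = real (\<Sum>j=1..m. \<Sum>i\<le>m - j. card (Kset i (m - j - i))) * (d * 2 ^ N * C) ^ (m - 1) * C"

lemma p_bound_sum:
  assumes "1 \<le> m"
  shows "(\<Sum>s\<in>{1..a}. \<Sum>j\<in>{1..m}. \<Sum>i\<le>m - j. \<Sum>ks\<in>Kset i (m - j - i).
      (real d * 2 ^ N * C) ^ (m - 1) * C * real a ^ (m - 1)) = p_bound d N m C * real a ^ m"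
proof -
  obtain m' where m: "m = Suc m'"
    using assms by (cases m) auto
  have sum_const: "(\<Sum>j\<in>A. \<Sum>i\<in>B j. \<Sum>ks\<in>E j i. W) = real (\<Sum>j\<in>A. \<Sum>i\<in>B j. card (E j i)) * W"
    for A B E and W :: real
    by (simp add: sum_distrib_right)
  have "(\<Sum>s\<in>{1..a}. \<Sum>j\<in>{1..m}. \<Sum>i\<le>m - j. \<Sum>ks\<in>Kset i (m - j - i).
      (real d * 2 ^ N * C) ^ (m - 1) * C * real a ^ (m - 1)) =
      (\<Sum>s\<in>{1..a}. real (\<Sum>j\<in>{1..m}. \<Sum>i\<le>m - j. card (Kset i (m - j - i))) *
        ((real d * 2 ^ N * C) ^ (m - 1) * C * real a ^ (m - 1)))"
    by (simp only: sum_const)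
  also have "\<dots> = p_bound d N m C * real a ^ m"
    by (simp add: p_bound_def m mult_ac)
  finally show ?thesis .
qed

fun coeff_bound :: "nat \<Rightarrow> nat \<Rightarrow> real \<Rightarrow> real \<Rightarrow> nat \<Rightarrow> real" where
  "coeff_bound d K2 M \<beta> 0 = 1"
| "coeff_bound d K2 M \<beta> (Suc m) =
    (let C = max (coeff_bound d K2 M \<beta> m) (c_bound d (K2 - Suc m) M \<beta> (Suc m) (coeff_bound d K2 M \<beta> m))
     in max C (p_bound d (K2 - Suc m) (Suc m) C))"

lemma coeff_bound_ge_1: "1 \<le> coeff_bound d K2 M \<beta> m"
  by (induction m) (auto simp: Let_def le_max_iff_disj)

locale memoryless_setting =
  fixes \<beta> M :: real and K2 :: nat and D :: "'a::euclidean_space set"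
    and L :: "nat \<Rightarrow> 'a \<Rightarrow> real" and c :: "nat \<Rightarrow> nat \<Rightarrow> 'a \<Rightarrow> 'a"
    and p :: "nat \<Rightarrow> nat \<Rightarrow> nat \<Rightarrow> 'a \<Rightarrow> 'a"
  assumes beta: "0 \<le> \<beta>" "\<beta> < 1"
    and M_nonneg: "0 \<le> M"
    and open_D: "open D"
    and L_smooth: "\<And>n. Ck_on K2 D (L n)"
    and L_bounded: "\<And>n k \<theta>. \<theta> \<in> D \<Longrightarrow> 1 \<le> k \<Longrightarrow> k \<le> K2 \<Longrightarrow> opnorm_le (Dk k (L n) \<theta>) k M"
    and coeffs: "memoryless_coeffs \<beta> L D c p"

begin

lemma L_bounded_derivs:
  "1 \<le> length ws \<Longrightarrow> length ws + N \<le> K2 \<Longrightarrow> \<forall>w\<in>set ws. norm w \<le> 1 \<Longrightarrow>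
    bounded_derivs N D (\<lambda>y. Dk (length ws) (L n) y ws) M"
proof (induction N arbitrary: ws)
  case 0
  then show ?case
    using L_bounded unfolding opnorm_le_def by auto
next
  case (Suc N)
  show ?case
  proof (rule bounded_derivs_SucI[OF open_D])
    show "norm (Dk (length ws) (L n) x ws) \<le> M" if "x \<in> D" for x
      using L_bounded[OF that Suc.prems(1)] Suc.prems unfolding opnorm_le_def by auto
    show "((\<lambda>y. Dk (length ws) (L n) y ws) has_derivative (\<lambda>u. Dk (Suc (length ws)) (L n) x (u # ws))) (at x)"
      if "x \<in> D" for x
      using L_smooth[of n] Suc.prems(2) that unfolding Ck_on_def by auto
    show "bounded_derivs N D (\<lambda>y. Dk (Suc (length ws)) (L n) y (u # ws)) M" if "norm u \<le> 1" for u
      using Suc.IH[of "u # ws"] Suc.prems that by simp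
  qed
qed

lemma multilinear_Dk_L:
  assumes "1 \<le> k" "k \<le> K2" "x \<in> D"
  shows "multilinear k (Dk k (L n) x)"
proof (rule multilinear_Dk[OF open_D assms(3)])
  show "L n differentiable (at y)" if "y \<in> D" for y
  proof -
    have "\<forall>j<K2. \<forall>us. length us = j \<longrightarrow> (\<forall>x\<in>D.
        ((\<lambda>y. Dk j (L n) y us) has_derivative (\<lambda>u. Dk (Suc j) (L n) x (u # us))) (at x))"
      using L_smooth[of n] unfolding Ck_on_def by blast
    from this[rule_format, of 0 "[]" y] have "(L n has_derivative (\<lambda>u. Dk 1 (L n) y [u])) (at y)"
      using assms that by simp
    then show ?thesis
      by (rule differentiableI)
  qed
  show "bounded_derivs (K2 - 1) D (\<lambda>y. frechet_derivative (L n) (at y) u) M" if "norm u \<le> 1" for u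
    using L_bounded_derivs[of "[u]" "K2 - 1"] assms that by simp
  show "k \<le> Suc (K2 - 1)"
    using assms by simp
qed

lemma c1_eq: "\<theta> \<in> D \<Longrightarrow> c 1 n \<theta> = - (\<Sum>k\<le>n. \<beta> ^ k *\<^sub>R gvec (Dk 1 (L (n - k)) \<theta>) [])"
  using coeffs unfolding memoryless_coeffs_def by blast

lemma c_eq:
  "2 \<le> m \<Longrightarrow> \<theta> \<in> D \<Longrightarrow> c m n \<theta> = - (\<Sum>k\<in>{1..n}. \<beta> ^ k *\<^sub>R
     (\<Sum>i\<le>m - 1. \<Sum>ks\<in>Kset i (m - 1 - i).
        kcoef ks *\<^sub>R gvec (Dk (Suc i) (L (n - k)) \<theta>) (margs ks (\<lambda>q. p q n k \<theta>))))"
  using coeffs unfolding memoryless_coeffs_def by blast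

lemma p_eq:
  "1 \<le> m \<Longrightarrow> a \<in> {1..n} \<Longrightarrow> \<theta> \<in> D \<Longrightarrow> p m n a \<theta> =
     - (\<Sum>s\<in>{1..a}. \<Sum>j\<in>{1..m}. \<Sum>i\<le>m - j. \<Sum>ks\<in>Kset i (m - j - i).
          kcoef ks *\<^sub>R Dk i (c j (n - s)) \<theta> (margs ks (\<lambda>q. p q n s \<theta>)))"
  using coeffs unfolding memoryless_coeffs_def by blast

lemma c1_bounded:
  assumes "1 \<le> K2"
  shows "bounded_derivs (K2 - 1) D (c 1 n) (c_bound DIM('a) (K2 - 1) M \<beta> 1 C)"
proof -
  have "bounded_derivs (K2 - 1) D (\<lambda>y. gvec (Dk 1 (L (n - k)) y) []) (real DIM('a) * M)" for k
  proof (rule bounded_derivs_gvec[OF open_D])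
    fix b :: 'a assume "b \<in> Basis"
    then show "bounded_derivs (K2 - 1) D (\<lambda>y. Dk 1 (L (n - k)) y [b]) M"
      using L_bounded_derivs[of "[b]" "K2 - 1" "n - k"] assms by simp
  qed
  then have "bounded_derivs (K2 - 1) D (\<lambda>y. \<Sum>k\<le>n. \<beta> ^ k *\<^sub>R gvec (Dk 1 (L (n - k)) y) [])
      (real DIM('a) * M * (\<Sum>k. real k ^ 0 * \<beta> ^ k))"
    by (intro bounded_derivs_geometric_sum[OF open_D beta _ finite_atMost]) (simp_all add: M_nonneg)
  from bounded_derivs_uminus[OF open_D this]
  have "bounded_derivs (K2 - 1) D (c 1 n) (real DIM('a) * M * (\<Sum>k. real k ^ 0 * \<beta> ^ k))"
    by (rule bounded_derivs_cong[OF open_D, rotated]) (rule c1_eq[symmetric])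
  then show ?thesis
    by (simp add: c_bound_def Kset_0_0)
qed

lemma Dk_L_margs_bounded:
  assumes "1 \<le> m" "m \<le> K2" "0 \<le> C" "0 \<le> s" "i \<le> m - 1" "ks \<in> Kset i (m - 1 - i)" "b \<in> Basis"
    and "\<And>q. 1 \<le> q \<Longrightarrow> q < m \<Longrightarrow> bounded_derivs (K2 - m) D (P q) (C * s ^ q)"
  shows "bounded_derivs (K2 - m) D (\<lambda>y. Dk (Suc i) (L n) y (b # margs ks (\<lambda>q. P q y)))
    ((real DIM('a) * 2 ^ (K2 - m)) ^ i * M * (C ^ i * s ^ (m - 1)))"
proof -
  have "bounded_derivs (K2 - m) D (\<lambda>y. Dk (Suc i) (L n) y (b # margs ks (\<lambda>q. P q y)))
      ((real DIM('a) * 2 ^ (K2 - m)) ^ i * M * (C ^ i * s ^ (i + (m - 1 - i))))"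
  proof (rule bounded_derivs_margs[OF open_D assms(6) M_nonneg assms(3,4),
        where T = "\<lambda>y ws. Dk (Suc i) (L n) y (b # ws)"])
    show "multilinear i (\<lambda>ws. Dk (Suc i) (L n) y (b # ws))" if "y \<in> D" for y
      by (rule multilinear_Cons[OF multilinear_Dk_L]) (use assms(1,2,5) that in auto)
    show "bounded_derivs (K2 - m) D (\<lambda>y. Dk (Suc i) (L n) y (b # ws)) M"
      if "length ws = i" "set ws \<subseteq> Basis" for ws
    proof -
      have "length (b # ws) + (K2 - m) \<le> K2"
        using assms(1,2,5) that(1) by simp
      moreover have "\<forall>w\<in>set (b # ws). norm w \<le> 1"
        using assms(7) that(2) by auto
      ultimately show ?thesis
        using L_bounded_derivs[of "b # ws" "K2 - m" n] that(1) by simp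
    qed
  qed (use assms(5,8) in auto)
  moreover have "i + (m - 1 - i) = m - 1"
    using assms(5) by simp
  ultimately show ?thesis
    by simp
qed

lemma c_term_bounded:
  assumes "1 \<le> m" "m \<le> K2" "1 \<le> C" "k \<in> {1..n}" "i \<le> m - 1" "ks \<in> Kset i (m - 1 - i)"
    and p: "\<And>q n a. 1 \<le> q \<Longrightarrow> q < m \<Longrightarrow> a \<in> {1..n} \<Longrightarrow>
      bounded_derivs (K2 - m) D (p q n a) (C * real a ^ q)"
  shows "bounded_derivs (K2 - m) D
    (\<lambda>y. kcoef ks *\<^sub>R gvec (Dk (Suc i) (L (n - k)) y) (margs ks (\<lambda>q. p q n k y)))
    (real DIM('a) * (M * (real DIM('a) * 2 ^ (K2 - m) * C) ^ (m - 1) * real k ^ (m - 1)))"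
proof (rule bounded_derivs_kcoef[OF open_D], rule_tac [2] bounded_derivs_gvec[OF open_D])
  let ?G = "real DIM('a) * 2 ^ (K2 - m)"
  fix b :: 'a assume b: "b \<in> Basis"
  have pk: "\<And>q. 1 \<le> q \<Longrightarrow> q < m \<Longrightarrow> bounded_derivs (K2 - m) D (p q n k) (C * real k ^ q)"
    using p assms(4) by blast
  have "bounded_derivs (K2 - m) D (\<lambda>y. Dk (Suc i) (L (n - k)) y (b # margs ks (\<lambda>q. p q n k y)))
      (?G ^ i * M * (C ^ i * real k ^ (m - 1)))"
    by (rule Dk_L_margs_bounded) (use assms(1-6) b pk in simp_all)
  moreover have "?G ^ i * M * (C ^ i * real k ^ (m - 1)) \<le> M * (?G * C) ^ (m - 1) * real k ^ (m - 1)"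
  proof -
    have "?G ^ i * M * (C ^ i * real k ^ (m - 1)) = M * (?G ^ i * C ^ i) * real k ^ (m - 1)"
      by (simp add: mult_ac)
    also have "\<dots> \<le> M * (?G * C) ^ (m - 1) * real k ^ (m - 1)"
      by (intro mult_right_mono mult_left_mono DIM_scale_power_le assms(3,5) M_nonneg) simp
    finally show ?thesis .
  qed
  ultimately show "bounded_derivs (K2 - m) D (\<lambda>y. Dk (Suc i) (L (n - k)) y (b # margs ks (\<lambda>q. p q n k y)))
      (M * (?G * C) ^ (m - 1) * real k ^ (m - 1))"
    by (rule bounded_derivs_le_bound)
qed (use assms(3) M_nonneg in simp)

lemma cm_bounded:
  assumes "2 \<le> m" "m \<le> K2" "1 \<le> C"
    and p: "\<And>q n a. 1 \<le> q \<Longrightarrow> q < m \<Longrightarrow> a \<in> {1..n} \<Longrightarrow>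
      bounded_derivs (K2 - m) D (p q n a) (C * real a ^ q)"
  shows "bounded_derivs (K2 - m) D (c m n) (c_bound DIM('a) (K2 - m) M \<beta> m C)"
proof -
  let ?X = "real DIM('a) * (M * (real DIM('a) * 2 ^ (K2 - m) * C) ^ (m - 1))"
  let ?KC = "real (\<Sum>i\<le>m - 1. card (Kset i (m - 1 - i)))"
  have inner: "bounded_derivs (K2 - m) D (\<lambda>y. \<Sum>i\<le>m - 1. \<Sum>ks\<in>Kset i (m - 1 - i).
      kcoef ks *\<^sub>R gvec (Dk (Suc i) (L (n - k)) y) (margs ks (\<lambda>q. p q n k y)))
    (?KC * ?X * real k ^ (m - 1))" if "k \<in> {1..n}" for k
  proof (rule bounded_derivs_sum_le[OF open_D finite_atMost])
    let ?Y = "real DIM('a) * (M * (real DIM('a) * 2 ^ (K2 - m) * C) ^ (m - 1) * real k ^ (m - 1))"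
    show "bounded_derivs (K2 - m) D (\<lambda>y. \<Sum>ks\<in>Kset i (m - 1 - i).
        kcoef ks *\<^sub>R gvec (Dk (Suc i) (L (n - k)) y) (margs ks (\<lambda>q. p q n k y)))
      (\<Sum>ks\<in>Kset i (m - 1 - i). ?Y)" if "i \<in> {..m - 1}" for i
      using assms \<open>k \<in> {1..n}\<close> that
      by (intro bounded_derivs_sum[OF open_D finite_Kset] c_term_bounded) auto
    have "(\<Sum>i\<le>m - 1. \<Sum>ks\<in>Kset i (m - 1 - i). ?Y) = (\<Sum>i\<le>m - 1. real (card (Kset i (m - 1 - i))) * ?Y)"
      by simp
    also have "\<dots> = ?KC * ?Y"
      by (simp add: sum_distrib_right)
    also have "\<dots> = ?KC * ?X * real k ^ (m - 1)"
      by (simp add: mult_ac)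
    finally show "(\<Sum>i\<le>m - 1. \<Sum>ks\<in>Kset i (m - 1 - i). ?Y) \<le> ?KC * ?X * real k ^ (m - 1)"
      by simp
  qed
  have "bounded_derivs (K2 - m) D (\<lambda>y. \<Sum>k\<in>{1..n}. \<beta> ^ k *\<^sub>R (\<Sum>i\<le>m - 1. \<Sum>ks\<in>Kset i (m - 1 - i).
      kcoef ks *\<^sub>R gvec (Dk (Suc i) (L (n - k)) y) (margs ks (\<lambda>q. p q n k y))))
      (?KC * ?X * (\<Sum>k. real k ^ (m - 1) * \<beta> ^ k))"
    by (rule bounded_derivs_geometric_sum[OF open_D beta _ finite_atLeastAtMost inner])
      (use assms(3) M_nonneg in \<open>simp add: sum_nonneg\<close>)
  from bounded_derivs_uminus[OF open_D this]
  have "bounded_derivs (K2 - m) D (c m n) (?KC * ?X * (\<Sum>k. real k ^ (m - 1) * \<beta> ^ k))"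
    by (rule bounded_derivs_cong[OF open_D, rotated]) (rule c_eq[OF assms(1), symmetric])
  then show ?thesis
    by (simp add: c_bound_def mult_ac)
qed

lemma c_bounded:
  assumes "1 \<le> m" "m \<le> K2" "1 \<le> C"
    and "\<And>q n a. 1 \<le> q \<Longrightarrow> q < m \<Longrightarrow> a \<in> {1..n} \<Longrightarrow>
      bounded_derivs (K2 - m) D (p q n a) (C * real a ^ q)"
  shows "bounded_derivs (K2 - m) D (c m n) (c_bound DIM('a) (K2 - m) M \<beta> m C)"
proof (cases "m = 1")
  case True
  then show ?thesis using c1_bounded assms(2) by simp
next
  case False
  then show ?thesis using cm_bounded assms by simp
qed

lemma p_term_bounded:
  assumes "m \<le> K2" "1 \<le> C" "1 \<le> s" "s \<le> a" "1 \<le> j" "j \<le> m" "i \<le> m - j" "ks \<in> Kset i (m - j - i)"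
    and c: "bounded_derivs (K2 - j) D (c j n') C"
    and p: "\<And>q. 1 \<le> q \<Longrightarrow> q < m \<Longrightarrow> bounded_derivs (K2 - m) D (p q n s) (C * real s ^ q)"
  shows "bounded_derivs (K2 - m) D (\<lambda>y. Dk i (c j n') y (margs ks (\<lambda>q. p q n s y)))
    ((real DIM('a) * 2 ^ (K2 - m) * C) ^ (m - 1) * C * real a ^ (m - 1))"
proof -
  let ?G = "real DIM('a) * 2 ^ (K2 - m)"
  have cj: "bounded_derivs (K2 - m + i) D (c j n') C"
    by (rule bounded_derivs_mono[OF c]) (use assms in simp_all)
  have "bounded_derivs (K2 - m) D (\<lambda>y. Dk i (c j n') y (margs ks (\<lambda>q. p q n s y)))
      (?G ^ i * C * (C ^ i * real s ^ (i + (m - j - i))))"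
  proof (rule bounded_derivs_margs[OF open_D assms(8)])
    show "multilinear i (Dk i (c j n') y)" if "y \<in> D" for y
      by (rule multilinear_Dk_bounded_derivs[OF open_D that cj]) simp
    show "bounded_derivs (K2 - m) D (\<lambda>y. Dk i (c j n') y ws) C"
      if "length ws = i" "set ws \<subseteq> Basis" for ws
    proof -
      have "\<forall>w\<in>set ws. norm w \<le> 1"
        using that(2) by auto
      from bounded_derivs_Dk[OF cj[folded that(1)] this] show ?thesis
        using that(1) by simp
    qed
  qed (use assms p in auto)
  moreover have "?G ^ i * C * (C ^ i * real s ^ (i + (m - j - i))) \<le> (?G * C) ^ (m - 1) * C * real a ^ (m - 1)"
  proof -
    have sa: "real s ^ (m - j) \<le> real a ^ (m - 1)"
      using assms(3-5) by (intro order.trans[OF power_mono power_increasing]) simp_all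
    have "i + (m - j - i) = m - j"
      using assms(7) by simp
    then have "?G ^ i * C * (C ^ i * real s ^ (i + (m - j - i))) = ?G ^ i * C ^ i * C * real s ^ (m - j)"
      by (simp add: mult_ac)
    also have "\<dots> \<le> (?G * C) ^ (m - 1) * C * real a ^ (m - 1)"
      by (intro mult_mono DIM_scale_power_le order.refl sa) (use assms(2,5,7) in simp_all)
    finally show ?thesis .
  qed
  ultimately show ?thesis
    by (rule bounded_derivs_le_bound)
qed

lemma p_bounded:
  assumes "1 \<le> m" "m \<le> K2" "1 \<le> C" "a \<in> {1..n}"
    and c: "\<And>j n. 1 \<le> j \<Longrightarrow> j \<le> m \<Longrightarrow> bounded_derivs (K2 - j) D (c j n) C"
    and p: "\<And>q n a. 1 \<le> q \<Longrightarrow> q < m \<Longrightarrow> a \<in> {1..n} \<Longrightarrow>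
      bounded_derivs (K2 - m) D (p q n a) (C * real a ^ q)"
  shows "bounded_derivs (K2 - m) D (p m n a) (p_bound DIM('a) (K2 - m) m C * real a ^ m)"
proof -
  let ?X = "(real DIM('a) * 2 ^ (K2 - m) * C) ^ (m - 1) * C * real a ^ (m - 1)"
  have "bounded_derivs (K2 - m) D (\<lambda>y. \<Sum>s\<in>{1..a}. \<Sum>j\<in>{1..m}. \<Sum>i\<le>m - j. \<Sum>ks\<in>Kset i (m - j - i).
      kcoef ks *\<^sub>R Dk i (c j (n - s)) y (margs ks (\<lambda>q. p q n s y)))
    (\<Sum>s\<in>{1..a}. \<Sum>j\<in>{1..m}. \<Sum>i\<le>m - j. \<Sum>ks\<in>Kset i (m - j - i). ?X)"
  proof (intro bounded_derivs_sum[OF open_D] finite_atLeastAtMost finite_atMost finite_Kset)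
    fix s j i ks
    assume "s \<in> {1..a}" "j \<in> {1..m}" "i \<in> {..m - j}" "ks \<in> Kset i (m - j - i)"
    with assms have "bounded_derivs (K2 - m) D (\<lambda>y. Dk i (c j (n - s)) y (margs ks (\<lambda>q. p q n s y))) ?X"
      by (intro p_term_bounded) auto
    then show "bounded_derivs (K2 - m) D
        (\<lambda>y. kcoef ks *\<^sub>R Dk i (c j (n - s)) y (margs ks (\<lambda>q. p q n s y))) ?X"
      by (rule bounded_derivs_kcoef[OF open_D, rotated]) (use assms(3) in simp)
  qed
  then have "bounded_derivs (K2 - m) D (\<lambda>y. - (\<Sum>s\<in>{1..a}. \<Sum>j\<in>{1..m}. \<Sum>i\<le>m - j.
      \<Sum>ks\<in>Kset i (m - j - i). kcoef ks *\<^sub>R Dk i (c j (n - s)) y (margs ks (\<lambda>q. p q n s y))))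
    (p_bound DIM('a) (K2 - m) m C * real a ^ m)"
    using bounded_derivs_uminus[OF open_D] p_bound_sum[OF assms(1)] by simp
  then show ?thesis
    by (rule bounded_derivs_cong[OF open_D, rotated]) (rule p_eq[OF assms(1,4), symmetric])
qed

lemma coeff_bounds_Suc:
  fixes m :: nat and C :: real
  defines "C \<equiv> coeff_bound DIM('a) K2 M \<beta> m"
  assumes "Suc m \<le> K2"
    and IH: "\<And>j n. 1 \<le> j \<Longrightarrow> j \<le> m \<Longrightarrow> bounded_derivs (K2 - j) D (c j n) C \<and>
      (\<forall>a\<in>{1..n}. bounded_derivs (K2 - j) D (p j n a) (C * real a ^ j))"
  shows "bounded_derivs (K2 - Suc m) D (c (Suc m) n) (coeff_bound DIM('a) K2 M \<beta> (Suc m))"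
    and "a \<in> {1..n} \<Longrightarrow>
      bounded_derivs (K2 - Suc m) D (p (Suc m) n a) (coeff_bound DIM('a) K2 M \<beta> (Suc m) * real a ^ Suc m)"
proof -
  define C' where "C' = max C (c_bound DIM('a) (K2 - Suc m) M \<beta> (Suc m) C)"
  have C: "1 \<le> C" "C \<le> C'" "C' \<le> coeff_bound DIM('a) K2 M \<beta> (Suc m)"
    "p_bound DIM('a) (K2 - Suc m) (Suc m) C' \<le> coeff_bound DIM('a) K2 M \<beta> (Suc m)"
    by (simp_all add: C_def C'_def Let_def coeff_bound_ge_1)
  have p_old: "bounded_derivs (K2 - Suc m) D (p q n' a') (C * real a' ^ q)"
    if "1 \<le> q" "q < Suc m" "a' \<in> {1..n'}" for q n' a'
  proof -
    have "bounded_derivs (K2 - q) D (p q n' a') (C * real a' ^ q)"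
      using IH[of q n'] that by simp
    then show ?thesis
      by (rule bounded_derivs_mono) (use that in simp_all)
  qed
  have "bounded_derivs (K2 - Suc m) D (c (Suc m) n') (c_bound DIM('a) (K2 - Suc m) M \<beta> (Suc m) C)" for n'
    by (rule c_bounded[OF _ assms(2) C(1)]) (simp_all add: p_old)
  then have c_new: "bounded_derivs (K2 - Suc m) D (c (Suc m) n') C'" for n'
    by (rule bounded_derivs_le_bound) (simp add: C'_def)
  then show "bounded_derivs (K2 - Suc m) D (c (Suc m) n) (coeff_bound DIM('a) K2 M \<beta> (Suc m))"
    using C(3) by (rule bounded_derivs_le_bound)
  assume a: "a \<in> {1..n}"
  have "bounded_derivs (K2 - j) D (c j n') C'" if "1 \<le> j" "j \<le> Suc m" for j n'
    using IH[OF that(1)] c_new C(2) that(2) le_Suc_eq bounded_derivs_le_bound by metis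
  moreover have "bounded_derivs (K2 - Suc m) D (p q n' a') (C' * real a' ^ q)"
    if "1 \<le> q" "q < Suc m" "a' \<in> {1..n'}" for q n' a'
    using p_old[OF that] by (rule bounded_derivs_le_bound) (simp add: C(2) mult_right_mono)
  ultimately have "bounded_derivs (K2 - Suc m) D (p (Suc m) n a)
      (p_bound DIM('a) (K2 - Suc m) (Suc m) C' * real a ^ Suc m)"
    using p_bounded[OF _ assms(2) _ a] C by fastforce
  then show "bounded_derivs (K2 - Suc m) D (p (Suc m) n a) (coeff_bound DIM('a) K2 M \<beta> (Suc m) * real a ^ Suc m)"
    by (rule bounded_derivs_le_bound) (intro mult_right_mono C(4); simp)
qed

lemma coeff_bounds:
  "m \<le> K2 \<Longrightarrow> 1 \<le> j \<Longrightarrow> j \<le> m \<Longrightarrow>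
    bounded_derivs (K2 - j) D (c j n) (coeff_bound DIM('a) K2 M \<beta> m) \<and>
    (\<forall>a\<in>{1..n}. bounded_derivs (K2 - j) D (p j n a) (coeff_bound DIM('a) K2 M \<beta> m * real a ^ j))"
proof (induction m arbitrary: j n)
  case 0
  then show ?case by simp
next
  case (Suc m)
  show ?case
  proof (cases "j = Suc m")
    case True
    then show ?thesis
      using coeff_bounds_Suc[OF Suc.prems(1) Suc.IH] Suc.prems(1) by simp
  next
    case False
    then have "bounded_derivs (K2 - j) D (c j n) (coeff_bound DIM('a) K2 M \<beta> m) \<and>
        (\<forall>a\<in>{1..n}. bounded_derivs (K2 - j) D (p j n a) (coeff_bound DIM('a) K2 M \<beta> m * real a ^ j))"
      using Suc.IH Suc.prems by simp
    moreover have "coeff_bound DIM('a) K2 M \<beta> m \<le> coeff_bound DIM('a) K2 M \<beta> (Suc m)"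
      by (simp add: Let_def)
    ultimately show ?thesis
      by (auto intro: bounded_derivs_le_bound mult_right_mono)
  qed
qed

end

theorem mainTheorem3:
  fixes K :: nat and \<beta> M :: real
  assumes "K \<ge> 2" and "0 < \<beta>" and "\<beta> < 1"
  shows "\<exists>C. \<forall>(D :: 'a::euclidean_space set) L c p.
     open D \<longrightarrow> convex D \<longrightarrow>
     (\<forall>n. Ck_on (2 * K) D (L n)) \<longrightarrow>
     (\<forall>n k. \<forall>\<theta>\<in>D. 1 \<le> k \<longrightarrow> k \<le> 2 * K \<longrightarrow> opnorm_le (Dk k (L n) \<theta>) k M) \<longrightarrow>
     memoryless_coeffs \<beta> L D c p \<longrightarrow>
     (\<forall>\<theta>\<in>D. \<forall>m\<in>{1..K}. \<forall>r\<le>2 * K - m. \<forall>n.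
        opnorm_le (Dk r (c m n) \<theta>) r C \<and>
        (\<forall>a\<in>{1..n}. opnorm_le (Dk r (p m n a) \<theta>) r (C * real a ^ m)))"
proof (rule exI[of _ "coeff_bound DIM('a) (2 * K) (max M 0) \<beta> K"], intro allI impI ballI conjI)
  let ?C = "coeff_bound DIM('a) (2 * K) (max M 0) \<beta> K"
  fix D :: "'a set" and L c p \<theta> m r n
  assume "open D" "convex D" "\<forall>n. Ck_on (2 * K) D (L n)"
    and L: "\<forall>n k. \<forall>\<theta>\<in>D. 1 \<le> k \<longrightarrow> k \<le> 2 * K \<longrightarrow> opnorm_le (Dk k (L n) \<theta>) k M"
    and "memoryless_coeffs \<beta> L D c p" "\<theta> \<in> D" "m \<in> {1..K}" "r \<le> 2 * K - m"
  interpret memoryless_setting \<beta> "max M 0" "2 * K" D L c p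
    using assms \<open>open D\<close> \<open>\<forall>n. Ck_on (2 * K) D (L n)\<close> \<open>memoryless_coeffs \<beta> L D c p\<close>
    by unfold_locales (auto intro: opnorm_le_mono[OF L[rule_format]])
  have bounds: "bounded_derivs (2 * K - m) D (c m n) ?C \<and>
      (\<forall>a\<in>{1..n}. bounded_derivs (2 * K - m) D (p m n a) (?C * real a ^ m))"
    using coeff_bounds[of K m n] \<open>m \<in> {1..K}\<close> by simp
  then show "opnorm_le (Dk r (c m n) \<theta>) r ?C"
    using opnorm_le_Dk \<open>\<theta> \<in> D\<close> \<open>r \<le> 2 * K - m\<close> by blast
  fix a assume "a \<in> {1..n}"
  then show "opnorm_le (Dk r (p m n a) \<theta>) r (?C * real a ^ m)"
    using bounds opnorm_le_Dk \<open>\<theta> \<in> D\<close> \<open>r \<le> 2 * K - m\<close> by blast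
qed

end
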